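(* Let $G:[0,1]\to\mathbb{R}$ be continuous, let $v>0$ be fixed, and let $\xi<1$ and $\gamma\ge1$. Define for $s>0$ $$J(s):=\int_0^s(v+s-x)^{-\gamma}x^{-\xi}G\Big(\frac{s-x}{v+s-x}\Big)\,\mathrm{d}x.$$ Then as $s\to\infty$, $$J(s)\sim\begin{cases}s^{-\xi}v^{1-\gamma}\int_0^1(1-z)^{\gamma-2}G(z)\,\mathrm{d}z, & \gamma>1,\\ s^{-\xi}(\ln s)\,G(1), & \gamma=1.\end{cases}$$
   Context: $f(s)\sim g(s)$ means $f(s)/g(s)\to1$. *)

theory Defs
  imports "HOL-Analysis.Analysis"
begin

definition Jfun :: "(real \<Rightarrow> real) \<Rightarrow> real \<Rightarrow> real \<Rightarrow> real \<Rightarrow> real \<Rightarrow> real" where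
  "Jfun G v \<xi> \<gamma> s =
     integral {0..s} (\<lambda>x. (v + s - x) powr (-\<gamma>) * x powr (-\<xi>) * G ((s - x) / (v + s - x)))"

end

theory Submission
  imports Defs "HOL-Real_Asymp.Real_Asymp"
begin

text \<open>Split \<open>J(s)\<close> at \<open>x = s/2\<close>. On \<open>[0, s/2]\<close> the factor \<open>(v + s - x) powr (-\<gamma>)\<close> is
  \<open>O(s powr (-\<gamma>))\<close>, so this part is \<open>O(s powr (1 - \<gamma> - \<xi>))\<close>, negligible after
  multiplying by \<open>s powr \<xi>\<close> (for \<open>\<gamma> = 1\<close>, after also dividing by \<open>ln s\<close>). On \<open>[s/2, s]\<close> the
  substitution \<open>x = s + v - v / w\<close> produces \<open>v powr (1 - \<gamma>) * s powr (-\<xi>)\<close> times the integral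
  of \<open>w powr (\<gamma> - 2) * ((s + v - v/w)/s) powr (-\<xi>) * G (1 - w)\<close> over \<open>[2v/(2v + s), 1]\<close>, where
  the middle factor is at most \<open>2\<close> and tends to \<open>1\<close>. For \<open>\<gamma> > 1\<close> the weight \<open>w powr (\<gamma> - 2)\<close>
  is integrable on \<open>[0, 1]\<close> and dominated convergence applies. For \<open>\<gamma> = 1\<close> the middle factor
  differs from \<open>1\<close> by \<open>O(v/(w s))\<close>, which costs only \<open>O(1)\<close>, and
  \<open>\<integral>\<^sub>t\<^sup>1 G(1 - w)/w dw \<sim> G(1) ln(1/t)\<close> as \<open>t \<rightarrow> 0\<close> by L'Hopital, with \<open>ln(1/t) \<sim> ln s\<close>.\<close>

lemma powr_minus_le_2:
  fixes y \<xi> :: real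
  assumes "1/2 \<le> y" "y \<le> 1" "\<xi> < 1"
  shows "y powr (-\<xi>) \<le> 2"
proof (cases "\<xi> \<ge> 0")
  case True
  have "y powr (-\<xi>) \<le> (1/2) powr (-\<xi>)"
    using assms True by (intro powr_mono2') auto
  also have "\<dots> = 2 powr \<xi>" by (simp add: powr_minus_divide powr_divide)
  also have "\<dots> \<le> 2 powr 1" using assms by (intro powr_mono) auto
  finally show ?thesis by simp
next
  case False
  then show ?thesis using assms powr_le1[of "-\<xi>" y] by simp
qed

lemma abs_powr_minus_sub_1_le:
  fixes y \<xi> :: real
  assumes "1/2 \<le> y" "y \<le> 1" "\<xi> < 1"
  shows "\<bar>y powr (-\<xi>) - 1\<bar> \<le> 4 * \<bar>\<xi>\<bar> * (1 - y)"
proof (cases "y = 1")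
  case True then show ?thesis by simp
next
  case False
  then have y1: "y < 1" using assms by simp
  have "\<And>t. y \<le> t \<Longrightarrow> t \<le> 1 \<Longrightarrow> DERIV (\<lambda>t. t powr (-\<xi>)) t :> (-\<xi>) * t powr (-\<xi> - 1)"
    using assms by (auto intro!: derivative_eq_intros)
  from MVT2[OF y1 this] obtain z where z: "y < z" "z < 1"
    "1 powr (-\<xi>) - y powr (-\<xi>) = (1 - y) * ((-\<xi>) * z powr (-\<xi> - 1))" by blast
  have z_bound: "z powr (-\<xi> - 1) \<le> 4"
  proof (cases "\<xi> \<le> -1")
    case True
    then show ?thesis using z assms powr_le1[of "-\<xi> - 1" z] by simp
  next
    case False
    have "z powr (-\<xi> - 1) \<le> (1/2) powr (-\<xi> - 1)"
      using False z assms by (intro powr_mono2') auto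
    also have "\<dots> = 2 powr (\<xi> + 1)" by (simp add: powr_def ln_div algebra_simps)
    also have "\<dots> \<le> 2 powr 2" using assms by (intro powr_mono) auto
    finally show ?thesis by simp
  qed
  have "\<bar>y powr (-\<xi>) - 1\<bar> = (1 - y) * (\<bar>\<xi>\<bar> * z powr (-\<xi> - 1))"
    using z(3) y1 by (simp add: abs_mult abs_minus_commute)
  also have "\<dots> \<le> (1 - y) * (\<bar>\<xi>\<bar> * 4)"
    using y1 z_bound by (intro mult_left_mono) auto
  finally show ?thesis by (simp add: algebra_simps)
qed

lemma dominated_convergence_at_top:
  fixes f :: "real \<Rightarrow> real \<Rightarrow> real"
  assumes f: "\<And>s. s \<ge> 1 \<Longrightarrow> f s integrable_on S" and h: "h integrable_on S"
    and le: "\<And>s x. s \<ge> 1 \<Longrightarrow> x \<in> S \<Longrightarrow> norm (f s x) \<le> h x"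
    and lim: "\<And>x. x \<in> S \<Longrightarrow> ((\<lambda>s. f s x) \<longlongrightarrow> g x) at_top"
  shows "((\<lambda>s. integral S (f s)) \<longlongrightarrow> integral S g) at_top"
proof (rule tendsto_at_topI_sequentially)
  fix X :: "nat \<Rightarrow> real" assume X: "filterlim X at_top sequentially"
  define Y where "Y n = max (X n) 1" for n
  have Y: "filterlim Y at_top sequentially"
    unfolding Y_def by (rule filterlim_at_top_mono[OF X]) auto
  have Y1: "Y n \<ge> 1" for n unfolding Y_def by simp
  have "(\<lambda>n. integral S (f (Y n))) \<longlonglongrightarrow> integral S g"
    using f Y1 h le Y1 filterlim_compose[OF lim Y]
    by (intro dominated_convergence(2)[where h = h]) auto
  moreover have "eventually (\<lambda>n. Y n = X n) sequentially"
    using filterlim_at_top[THEN iffD1, OF X, rule_format, of 1] by eventually_elim (simp add: Y_def)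
  ultimately show "(\<lambda>n. integral S (f (X n))) \<longlonglongrightarrow> integral S g"
    by (rule Lim_transform_eventually[OF _ eventually_mono]) auto
qed

lemma integral_reflect_unit_interval:
  fixes g :: "real \<Rightarrow> real"
  assumes "g integrable_on {0..1}"
  shows "integral {0..1} (\<lambda>z. g (1 - z)) = integral {0..1} g"
proof -
  have "(g has_integral integral {0..1} g) (cbox 0 1)"
    using assms by (simp add: integrable_integral)
  from has_integral_affinity[OF this, of "-1" 1]
  have "((\<lambda>x. g (1 - x)) has_integral integral {0..1} g) ((\<lambda>x. 1 - x) ` {0..1})"
    by simp
  moreover have "(\<lambda>x. 1 - x) ` {0..1} = {0..(1::real)}"
    by (auto intro: image_eqI[where x = "1 - x" for x])
  ultimately show ?thesis by (simp add: integral_unique)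
qed

lemma continuous_mult_powr_integrable:
  fixes f :: "real \<Rightarrow> real"
  assumes f: "continuous_on {0..c} f" and a: "a > -1" and c: "c \<ge> 0"
  shows "(\<lambda>x. f x * x powr a) integrable_on {0..c}"
proof -
  have "(\<lambda>x. f x * x powr a) absolutely_integrable_on {0..c}"
  proof (rule absolutely_integrable_bounded_measurable_product_real)
    show "f \<in> borel_measurable (lebesgue_on {0..c})"
      using f by (intro continuous_imp_measurable_on_sets_lebesgue) auto
    show "bounded (f ` {0..c})"
      using f by (intro compact_imp_bounded compact_continuous_image) auto
    show "(\<lambda>x. x powr a) absolutely_integrable_on {0..c}"
      using has_integral_powr_from_0[OF a c]
      by (intro nonnegative_absolutely_integrable_1) (auto simp: has_integral_integrable)
  qed simp
  then show ?thesis by (simp add: absolutely_integrable_on_def)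
qed

lemma tendsto_integral_div_w_over_ln_at_right_0:
  fixes G :: "real \<Rightarrow> real"
  assumes G: "continuous_on {0..1} G"
  shows "((\<lambda>t. integral {t..1} (\<lambda>w. w powr (-1) * G (1 - w)) / (- ln t)) \<longlongrightarrow> G 1) (at_right 0)"
proof (rule lhopital_right_0_at_top)
  show "LIM x at_right 0. - ln (x::real) :> at_top" by real_asymp
  have ev01: "eventually (\<lambda>t. 0 < t \<and> t < 1) (at_right (0::real))"
    by (simp add: eventually_at_right_field) (auto intro: exI[of _ 1])
  show "eventually (\<lambda>t. - inverse t \<noteq> 0) (at_right (0::real))"
    using ev01 by eventually_elim simp
  show "eventually (\<lambda>t. DERIV (\<lambda>t. - ln t) t :> - inverse t) (at_right (0::real))"
    using ev01 by eventually_elim (auto intro!: derivative_eq_intros simp: divide_inverse)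
  show "eventually (\<lambda>t. DERIV (\<lambda>t. integral {t..1} (\<lambda>w. w powr (-1) * G (1 - w))) t
        :> - (t powr (-1) * G (1 - t))) (at_right (0::real))"
    using ev01
  proof eventually_elim
    case (elim t)
    have "continuous_on {t/2..1} (\<lambda>w. w powr (-1) * G (1 - w))"
      using elim by (intro continuous_intros continuous_on_compose2[OF G]) auto
    then have "((\<lambda>x. integral {x..1} (\<lambda>w. w powr (-1) * G (1 - w))) has_real_derivative
          - (t powr (-1) * G (1 - t))) (at t within {t/2..1})"
      using elim by (intro integral_has_real_derivative') auto
    moreover have "at t within {t/2..1} = at t" using elim by (intro at_within_Icc_at) auto
    ultimately show ?case by simp
  qed
  have "((\<lambda>t. G (1 - t)) \<longlongrightarrow> G (1 - 0)) (at_right 0)"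
    using ev01 by (intro continuous_on_tendsto_compose[OF G] tendsto_intros)
      (auto elim: eventually_mono)
  moreover have "eventually (\<lambda>t. - (t powr (-1) * G (1 - t)) / - inverse t = G (1 - t)) (at_right 0)"
    using ev01 by eventually_elim (simp add: powr_minus field_simps)
  ultimately show "((\<lambda>t. - (t powr (-1) * G (1 - t)) / - inverse t) \<longlongrightarrow> G 1) (at_right 0)"
    by (simp add: tendsto_cong)
qed

definition J_integrand :: "(real \<Rightarrow> real) \<Rightarrow> real \<Rightarrow> real \<Rightarrow> real \<Rightarrow> real \<Rightarrow> real \<Rightarrow> real" where
  "J_integrand G v \<xi> \<gamma> s x = (v + s - x) powr (-\<gamma>) * x powr (-\<xi>) * G ((s - x) / (v + s - x))"

lemma Jfun_eq_integral_J_integrand: "Jfun G v \<xi> \<gamma> s = integral {0..s} (J_integrand G v \<xi> \<gamma> s)"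
  unfolding Jfun_def J_integrand_def ..

text \<open>The substitution \<open>x = s + v - v / w\<close> maps \<open>[w_lower v s, 1]\<close> onto \<open>[s/2, s]\<close>;
  \<open>Jupper\<close> is the integral of \<open>J_integrand\<close> over \<open>[s/2, s]\<close> in the variable \<open>w\<close>,
  divided by \<open>v powr (1 - \<gamma>) * s powr (-\<xi>)\<close>.\<close>

definition w_lower :: "real \<Rightarrow> real \<Rightarrow> real" where
  "w_lower v s = 2 * v / (2 * v + s)"

definition Jupper :: "(real \<Rightarrow> real) \<Rightarrow> real \<Rightarrow> real \<Rightarrow> real \<Rightarrow> real \<Rightarrow> real" where
  "Jupper G v \<xi> \<gamma> s =
     integral {w_lower v s..1} (\<lambda>w. w powr (\<gamma> - 2) * ((s + v - v / w) / s) powr (-\<xi>) * G (1 - w))"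

lemma w_lower_pos_lt_1:
  assumes "v > 0" "s > 0"
  shows "0 < w_lower v s" "w_lower v s < 1"
  using assms by (simp_all add: w_lower_def field_simps)

lemma substitution_range:
  fixes v s w :: real
  assumes v: "v > 0" and s: "s > 0" and w: "w_lower v s \<le> w" "w \<le> 1"
  shows "0 < w" "s/2 \<le> s + v - v / w" "s + v - v / w \<le> s"
proof -
  show w0: "0 < w" using w_lower_pos_lt_1[OF v s] w by simp
  have "v / w \<le> v / w_lower v s" using w w_lower_pos_lt_1[OF v s] v by (intro divide_left_mono) auto
  also have "\<dots> = v + s/2" unfolding w_lower_def using v s by (simp add: field_simps)
  finally show "s/2 \<le> s + v - v / w" by simp
  show "s + v - v / w \<le> s" using w w0 v by (simp add: field_simps)
qed

lemma substitution_ratio_bounds: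
  fixes v s w :: real
  assumes "v > 0" "s > 0" "w_lower v s \<le> w" "w \<le> 1"
  shows "0 < w" "1/2 \<le> (s + v - v / w) / s" "(s + v - v / w) / s \<le> 1"
  using substitution_range[OF assms] assms(2) by (simp_all add: field_simps)

lemma continuous_on_Jupper_integrand:
  fixes G :: "real \<Rightarrow> real"
  assumes G: "continuous_on {0..1} G" and v: "v > 0" and s: "s > 0"
  shows "continuous_on {w_lower v s..1} (\<lambda>w. w powr a * (((s + v - v / w) / s) powr b - c) * G (1 - w))"
proof -
  have pos: "0 < w" "0 < (s + v - v / w) / s" if "w \<in> {w_lower v s..1}" for w
    using substitution_ratio_bounds(1,2)[OF v s, of w] that by (auto, linarith)
  show ?thesis
    by (intro continuous_intros continuous_on_powr' continuous_on_compose2[OF G])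
      (use s w_lower_pos_lt_1[OF v s] in \<open>auto dest: pos\<close>)
qed

lemma integral_lower_half_J_integrand_bound:
  fixes G :: "real \<Rightarrow> real"
  assumes G: "continuous_on {0..1} G" and v: "v > 0" and \<xi>: "\<xi> < 1" and \<gamma>: "\<gamma> \<ge> 1"
    and s: "s > 0" and B: "\<And>z. z \<in> {0..1} \<Longrightarrow> \<bar>G z\<bar> \<le> B"
  shows "J_integrand G v \<xi> \<gamma> s integrable_on {0..s/2}"
    and "\<bar>integral {0..s/2} (J_integrand G v \<xi> \<gamma> s)\<bar>
           \<le> B * (v + s/2) powr (-\<gamma>) * ((s/2) powr (1 - \<xi>) / (1 - \<xi>))"
proof -
  let ?F = "J_integrand G v \<xi> \<gamma> s"
  have x_pow: "((\<lambda>x. x powr (-\<xi>)) has_integral ((s/2) powr (1 - \<xi>) / (1 - \<xi>))) {0..s/2}"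
    using has_integral_powr_from_0[of "-\<xi>" "s/2"] \<xi> s by simp
  have "continuous_on {0..s/2} (\<lambda>x. (v + s - x) powr (-\<gamma>) * G ((s - x) / (v + s - x)))"
    using v s by (intro continuous_intros continuous_on_compose2[OF G]) (auto simp: field_simps)
  from continuous_mult_powr_integrable[OF this, of "-\<xi>"]
  show F_int: "?F integrable_on {0..s/2}"
    using \<xi> s by (simp add: J_integrand_def[abs_def] mult_ac)
  define K where "K = B * (v + s/2) powr (-\<gamma>)"
  have "norm (?F x) \<le> K * x powr (-\<xi>)" if x: "x \<in> {0..s/2}" for x
  proof -
    have "(s - x) / (v + s - x) \<in> {0..1}" using x v by (auto simp: field_simps)
    moreover have "(v + s - x) powr (-\<gamma>) \<le> (v + s/2) powr (-\<gamma>)"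
      using x v \<gamma> by (intro powr_mono2') auto
    ultimately have "(v + s - x) powr (-\<gamma>) * x powr (-\<xi>) * \<bar>G ((s - x) / (v + s - x))\<bar>
        \<le> (v + s/2) powr (-\<gamma>) * x powr (-\<xi>) * B"
      using B by (intro mult_mono) auto
    then show ?thesis unfolding K_def J_integrand_def by (simp add: abs_mult mult_ac)
  qed
  then have "norm (integral {0..s/2} ?F) \<le> integral {0..s/2} (\<lambda>x. K * x powr (-\<xi>))"
    using F_int x_pow by (intro integral_norm_bound_integral integrable_on_mult_right)
      (auto simp: has_integral_integrable)
  also have "\<dots> = K * ((s/2) powr (1 - \<xi>) / (1 - \<xi>))"
    using x_pow by (simp add: integral_unique)
  finally show "\<bar>integral {0..s/2} ?F\<bar> \<le> B * (v + s/2) powr (-\<gamma>) * ((s/2) powr (1 - \<xi>) / (1 - \<xi>))"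
    by (simp add: K_def)
qed

lemma J_integrand_substitution:
  fixes G :: "real \<Rightarrow> real"
  assumes v: "v > 0" and s: "s > 0" and w: "0 < w" and x: "s + v - v / w > 0"
  shows "v * w powr (-2) * J_integrand G v \<xi> \<gamma> s (s + v - v / w)
       = v powr (1 - \<gamma>) * s powr (-\<xi>) * (w powr (\<gamma> - 2) * ((s + v - v / w) / s) powr (-\<xi>) * G (1 - w))"
proof -
  have gap: "v + s - (s + v - v / w) = v / w" by simp
  have G_arg: "(s - (s + v - v / w)) / (v + s - (s + v - v / w)) = 1 - w"
    using v w by (simp add: field_simps)
  have gap_powr: "(v / w) powr (-\<gamma>) = v powr (-\<gamma>) * w powr \<gamma>"
    using v w by (simp add: powr_divide powr_minus field_simps)
  have x_powr: "(s + v - v / w) powr (-\<xi>) = s powr (-\<xi>) * ((s + v - v / w) / s) powr (-\<xi>)"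
    using s x by (simp add: powr_divide)
  have v_powr: "v * v powr (-\<gamma>) = v powr (1 - \<gamma>)"
    using v powr_add[of v 1 "-\<gamma>"] by simp
  have w_powr: "w powr (-2) * w powr \<gamma> = w powr (\<gamma> - 2)"
    using w powr_add[of w "-2" "\<gamma>"] by simp
  show ?thesis
    unfolding J_integrand_def G_arg unfolding gap gap_powr x_powr v_powr[symmetric] w_powr[symmetric]
    by (simp add: algebra_simps)
qed

lemma integral_upper_half_J_integrand:
  fixes G :: "real \<Rightarrow> real"
  assumes G: "continuous_on {0..1} G" and v: "v > 0" and s: "s > 0"
  shows "(J_integrand G v \<xi> \<gamma> s has_integral v powr (1 - \<gamma>) * s powr (-\<xi>) * Jupper G v \<xi> \<gamma> s) {s/2..s}"
proof -
  let ?F = "J_integrand G v \<xi> \<gamma> s" and ?A = "w_lower v s"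
  define g where "g w = s + v - v / w" for w
  have F_cont: "continuous_on {s/2..s} ?F"
    unfolding J_integrand_def[abs_def] using v s
    by (intro continuous_intros continuous_on_compose2[OF G]) (auto simp: field_simps)
  have "((\<lambda>w. (v * w powr (-2)) *\<^sub>R ?F (g w)) has_integral integral {g ?A..g 1} ?F) {?A..1}"
  proof (rule has_integral_substitution[OF _ _ _ F_cont])
    show "?A \<le> 1" "g ` {?A..1} \<subseteq> {s/2..s}"
      using w_lower_pos_lt_1[OF v s] substitution_range[OF v s] unfolding g_def by auto
    show "g ?A \<le> g 1" using substitution_range[OF v s, of ?A] w_lower_pos_lt_1[OF v s]
      unfolding g_def by simp
    fix w assume "w \<in> {?A..1}"
    then have "w > 0" using w_lower_pos_lt_1[OF v s] by auto
    then show "(g has_field_derivative v * w powr (-2)) (at w within {?A..1})"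
      unfolding g_def by (auto intro!: derivative_eq_intros simp: powr_minus power2_eq_square field_simps)
  qed
  moreover have "g ?A = s/2" "g 1 = s"
    unfolding g_def w_lower_def using v s by (simp_all add: field_simps)
  moreover have "integral {?A..1} (\<lambda>w. (v * w powr (-2)) *\<^sub>R ?F (g w))
      = v powr (1 - \<gamma>) * s powr (-\<xi>) * Jupper G v \<xi> \<gamma> s"
    unfolding Jupper_def integral_mult_right[symmetric]
  proof (rule integral_cong)
    fix w assume "w \<in> {?A..1}"
    with substitution_range[OF v s, of w] s show "(v * w powr (-2)) *\<^sub>R ?F (g w) =
        v powr (1 - \<gamma>) * s powr (-\<xi>) * (w powr (\<gamma> - 2) * ((s + v - v / w) / s) powr (-\<xi>) * G (1 - w))"
      unfolding g_def using J_integrand_substitution[OF v s] by simp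
  qed
  ultimately show ?thesis
    using F_cont by (metis integrable_continuous_interval integrable_integral integral_unique)
qed

lemma Jfun_remainder_bound:
  fixes G :: "real \<Rightarrow> real"
  assumes G: "continuous_on {0..1} G" and v: "v > 0" and \<xi>: "\<xi> < 1" and \<gamma>: "\<gamma> \<ge> 1"
  obtains C where "\<And>s. s \<ge> 1 \<Longrightarrow>
    \<bar>Jfun G v \<xi> \<gamma> s * s powr \<xi> - v powr (1 - \<gamma>) * Jupper G v \<xi> \<gamma> s\<bar> \<le> C * s powr (1 - \<gamma>)"
proof -
  obtain B where B0: "B \<ge> 0" and B: "\<And>z. z \<in> {0..1} \<Longrightarrow> \<bar>G z\<bar> \<le> B"
    using continuous_on_compact_bound[OF compact_Icc G] by auto
  have "\<bar>Jfun G v \<xi> \<gamma> s * s powr \<xi> - v powr (1 - \<gamma>) * Jupper G v \<xi> \<gamma> s\<bar>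
      \<le> (B * 2 powr \<gamma> / (1 - \<xi>)) * s powr (1 - \<gamma>)" if s1: "s \<ge> 1" for s
  proof -
    have s: "s > 0" using s1 by simp
    let ?R = "integral {0..s/2} (J_integrand G v \<xi> \<gamma> s)"
    have "(J_integrand G v \<xi> \<gamma> s has_integral ?R + v powr (1 - \<gamma>) * s powr (-\<xi>) * Jupper G v \<xi> \<gamma> s) {0..s}"
      using s by (intro has_integral_combine[where c = "s/2"] integral_upper_half_J_integrand[OF G v s]
          integrable_integral integral_lower_half_J_integrand_bound(1)[OF G v \<xi> \<gamma> s B]) auto
    then have "Jfun G v \<xi> \<gamma> s * s powr \<xi> - v powr (1 - \<gamma>) * Jupper G v \<xi> \<gamma> s = ?R * s powr \<xi>"
      using s by (simp add: Jfun_eq_integral_J_integrand integral_unique powr_minus field_simps)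
    then have "\<bar>Jfun G v \<xi> \<gamma> s * s powr \<xi> - v powr (1 - \<gamma>) * Jupper G v \<xi> \<gamma> s\<bar> = \<bar>?R\<bar> * s powr \<xi>"
      by (simp add: abs_mult)
    also have "\<dots> \<le> B * (v + s/2) powr (-\<gamma>) * ((s/2) powr (1 - \<xi>) / (1 - \<xi>)) * s powr \<xi>"
      using integral_lower_half_J_integrand_bound(2)[OF G v \<xi> \<gamma> s B] by (intro mult_right_mono) auto
    also have "\<dots> \<le> B * (2 powr \<gamma> * s powr (-\<gamma>)) * (s powr (1 - \<xi>) / (1 - \<xi>)) * s powr \<xi>"
    proof -
      have "(v + s/2) powr (-\<gamma>) \<le> (s/2) powr (-\<gamma>)"
        using v s \<gamma> by (intro powr_mono2') auto
      also have "\<dots> = 2 powr \<gamma> * s powr (-\<gamma>)"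
        using s by (simp add: powr_divide powr_minus field_simps)
      finally have "(v + s/2) powr (-\<gamma>) \<le> 2 powr \<gamma> * s powr (-\<gamma>)" .
      moreover have "(s/2) powr (1 - \<xi>) \<le> s powr (1 - \<xi>)"
        using s \<xi> by (intro powr_mono2) auto
      ultimately show ?thesis
        using B0 \<xi> by (intro mult_right_mono mult_mono mult_left_mono divide_right_mono) auto
    qed
    also have "\<dots> = (B * 2 powr \<gamma> / (1 - \<xi>)) * (s powr (-\<gamma>) * s powr (1 - \<xi>) * s powr \<xi>)"
      by (simp add: field_simps)
    also have "s powr (-\<gamma>) * s powr (1 - \<xi>) * s powr \<xi> = s powr (1 - \<gamma>)"
      using s by (simp add: powr_add[symmetric])
    finally show ?thesis .
  qed
  then show ?thesis using that by blast
qed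

lemma abs_Jupper_integrand_le:
  fixes G :: "real \<Rightarrow> real"
  assumes "v > 0" "s > 0" "w_lower v s \<le> w" "w \<le> 1" and \<xi>: "\<xi> < 1" and B: "\<bar>G (1 - w)\<bar> \<le> B"
  shows "\<bar>w powr a * ((s + v - v / w) / s) powr (-\<xi>) * G (1 - w)\<bar> \<le> 2 * B * w powr a"
proof -
  note ratio = substitution_ratio_bounds[OF assms(1-4)]
  have "\<bar>w powr a * ((s + v - v / w) / s) powr (-\<xi>) * G (1 - w)\<bar>
      = w powr a * ((s + v - v / w) / s) powr (-\<xi>) * \<bar>G (1 - w)\<bar>"
    by (simp add: abs_mult)
  also have "\<dots> \<le> w powr a * 2 * B"
    using powr_minus_le_2[OF ratio(2,3) \<xi>] B by (intro mult_mono mult_left_mono) auto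
  finally show ?thesis by (simp add: mult_ac)
qed

lemma tendsto_Jupper_integrand:
  fixes G :: "real \<Rightarrow> real"
  shows "((\<lambda>s. w powr a * ((s + v - v / w) / s) powr (-\<xi>) * G (1 - w)) \<longlongrightarrow> w powr a * G (1 - w)) at_top"
proof -
  have "((\<lambda>s. (s + v - v / w) / s) \<longlongrightarrow> 1) at_top" by real_asymp
  then have "((\<lambda>s. w powr a * ((s + v - v / w) / s) powr (-\<xi>) * G (1 - w))
      \<longlongrightarrow> w powr a * 1 powr (-\<xi>) * G (1 - w)) at_top"
    by (intro tendsto_intros) auto
  then show ?thesis by simp
qed

lemma tendsto_Jupper:
  fixes G :: "real \<Rightarrow> real"
  assumes G: "continuous_on {0..1} G" and v: "v > 0" and \<xi>: "\<xi> < 1" and \<gamma>: "\<gamma> > 1"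
  shows "(Jupper G v \<xi> \<gamma> \<longlongrightarrow> integral {0..1} (\<lambda>z. (1 - z) powr (\<gamma> - 2) * G z)) at_top"
proof -
  obtain B where B0: "B \<ge> 0" and B: "\<And>z. z \<in> {0..1} \<Longrightarrow> \<bar>G z\<bar> \<le> B"
    using continuous_on_compact_bound[OF compact_Icc G] by auto
  define k where "k s w = w powr (\<gamma> - 2) * ((s + v - v / w) / s) powr (-\<xi>) * G (1 - w)" for s w
  define f where "f s w = (if w \<in> {w_lower v s..} then k s w else 0)" for s w
  define g where "g w = w powr (\<gamma> - 2) * G (1 - w)" for w
  have support: "{w_lower v s..} \<inter> {0..1} = {w_lower v s..1}" if "s > 0" for s
    using w_lower_pos_lt_1[OF v that] by auto
  have Jupper_eq: "Jupper G v \<xi> \<gamma> s = integral {0..1} (f s)" if "s > 0" for s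
    unfolding f_def integral_restrict_Int support[OF that] by (simp add: Jupper_def k_def[abs_def])
  have lim_f: "((\<lambda>s. integral {0..1} (f s)) \<longlongrightarrow> integral {0..1} g) at_top"
  proof (rule dominated_convergence_at_top[where h = "\<lambda>w. 2 * B * w powr (\<gamma> - 2)"])
    fix s :: real assume "s \<ge> 1"
    then have s: "s > 0" by simp
    have "k s integrable_on {w_lower v s..1}"
      using continuous_on_Jupper_integrand[OF G v s, of "\<gamma> - 2" "-\<xi>" 0]
      by (simp add: k_def[abs_def] integrable_continuous_interval)
    then show "f s integrable_on {0..1}"
      unfolding f_def integrable_restrict_Int support[OF s] .
  next
    show "(\<lambda>w. 2 * B * w powr (\<gamma> - 2)) integrable_on {0..1}"
      using has_integral_powr_from_0[of "\<gamma> - 2" 1] \<gamma>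
      by (intro integrable_on_mult_right) (auto simp: has_integral_integrable)
  next
    fix s w :: real assume "s \<ge> 1" and w: "w \<in> {0..1}"
    then have s: "s > 0" by simp
    have "\<bar>G (1 - w)\<bar> \<le> B" using B w by simp
    then show "norm (f s w) \<le> 2 * B * w powr (\<gamma> - 2)"
      using abs_Jupper_integrand_le[OF v s _ _ \<xi>, of w G B "\<gamma> - 2"] w B0
      by (simp add: f_def k_def)
  next
    fix w :: real assume w: "w \<in> {0..1}"
    show "((\<lambda>s. f s w) \<longlongrightarrow> g w) at_top"
    proof (cases "w = 0")
      case True
      have "eventually (\<lambda>s. f s w = g w) at_top"
        using eventually_gt_at_top[of 0]
      proof eventually_elim
        case (elim s)
        then show ?case using True w_lower_pos_lt_1(1)[OF v elim] by (simp add: f_def g_def)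
      qed
      then show ?thesis by (rule tendsto_eventually)
    next
      case False
      then have "w > 0" using w by simp
      moreover have "(w_lower v \<longlongrightarrow> 0) at_top" unfolding w_lower_def by real_asymp
      ultimately have "eventually (\<lambda>s. w_lower v s < w) at_top"
        by (simp add: order_tendstoD)
      then have f_eq: "eventually (\<lambda>s. k s w = f s w) at_top"
        by eventually_elim (simp add: f_def)
      have "((\<lambda>s. k s w) \<longlongrightarrow> g w) at_top"
        unfolding k_def g_def by (rule tendsto_Jupper_integrand)
      then show ?thesis using f_eq by (rule Lim_transform_eventually)
    qed
  qed
  have reflect_g: "integral {0..1} g = integral {0..1} (\<lambda>z. (1 - z) powr (\<gamma> - 2) * G z)"
  proof -
    have "continuous_on {0..1} (\<lambda>w. G (1 - w))"
      by (intro continuous_on_compose2[OF G] continuous_intros) auto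
    from continuous_mult_powr_integrable[OF this, of "\<gamma> - 2"]
    have "g integrable_on {0..1}" using \<gamma> by (simp add: g_def[abs_def] mult.commute)
    from integral_reflect_unit_interval[OF this] show ?thesis by (simp add: g_def)
  qed
  have "eventually (\<lambda>s. integral {0..1} (f s) = Jupper G v \<xi> \<gamma> s) at_top"
    using eventually_gt_at_top[of 0] by eventually_elim (simp add: Jupper_eq)
  from Lim_transform_eventually[OF lim_f this] show ?thesis by (simp only: reflect_g)
qed

lemma has_integral_inverse_square:
  fixes a b :: real
  assumes "0 < a" "a \<le> b"
  shows "((\<lambda>w. 1 / w\<^sup>2) has_integral (1 / a - 1 / b)) {a..b}"
proof -
  have "((\<lambda>w. 1 / w\<^sup>2) has_integral ((- 1 / b) - (- 1 / a))) {a..b}"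
  proof (rule fundamental_theorem_of_calculus)
    fix w assume "w \<in> {a..b}"
    then have "w > 0" using assms by auto
    then show "((\<lambda>w. - 1 / w) has_vector_derivative 1 / w\<^sup>2) (at w within {a..b})"
      unfolding has_real_derivative_iff_has_vector_derivative[symmetric]
      by (auto intro!: derivative_eq_intros simp: power2_eq_square field_simps)
  qed (use assms in simp)
  then show ?thesis by simp
qed

lemma abs_Jupper_integrand_sub_1_le:
  fixes G :: "real \<Rightarrow> real"
  assumes v: "v > 0" and s: "s > 0" and w: "w_lower v s \<le> w" "w \<le> 1"
    and \<xi>: "\<xi> < 1" and B: "\<bar>G (1 - w)\<bar> \<le> B"
  shows "\<bar>w powr (-1) * (((s + v - v / w) / s) powr (-\<xi>) - 1) * G (1 - w)\<bar>
           \<le> 4 * \<bar>\<xi>\<bar> * B * v / s * (1 / w\<^sup>2)"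
proof -
  note ratio = substitution_ratio_bounds[OF v s w]
  have "1 - (s + v - v / w) / s \<le> v / (w * s)"
    using v ratio(1) s by (simp add: field_simps)
  with abs_powr_minus_sub_1_le[OF ratio(2,3) \<xi>]
  have r: "\<bar>((s + v - v / w) / s) powr (-\<xi>) - 1\<bar> \<le> 4 * \<bar>\<xi>\<bar> * (v / (w * s))"
    by (smt (verit) mult_left_mono abs_ge_zero)
  have "\<bar>w powr (-1) * (((s + v - v / w) / s) powr (-\<xi>) - 1) * G (1 - w)\<bar>
      = (1 / w) * \<bar>((s + v - v / w) / s) powr (-\<xi>) - 1\<bar> * \<bar>G (1 - w)\<bar>"
    using ratio(1) by (simp add: abs_mult powr_minus divide_inverse)
  also have "\<dots> \<le> (1 / w) * (4 * \<bar>\<xi>\<bar> * (v / (w * s))) * B"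
    using r B ratio(1) v s by (intro mult_mono mult_left_mono) auto
  also have "\<dots> = 4 * \<bar>\<xi>\<bar> * B * v / s * (1 / w\<^sup>2)"
    by (simp add: field_simps power2_eq_square)
  finally show ?thesis .
qed

lemma Jupper_1_approx:
  fixes G :: "real \<Rightarrow> real"
  assumes G: "continuous_on {0..1} G" and v: "v > 0" and \<xi>: "\<xi> < 1"
  obtains C where "\<And>s. s \<ge> 1 \<Longrightarrow>
    \<bar>Jupper G v \<xi> 1 s - integral {w_lower v s..1} (\<lambda>w. w powr (-1) * G (1 - w))\<bar> \<le> C"
proof -
  obtain B where B0: "B \<ge> 0" and B: "\<And>z. z \<in> {0..1} \<Longrightarrow> \<bar>G z\<bar> \<le> B"
    using continuous_on_compact_bound[OF compact_Icc G] by auto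
  have "\<bar>Jupper G v \<xi> 1 s - integral {w_lower v s..1} (\<lambda>w. w powr (-1) * G (1 - w))\<bar>
      \<le> 4 * \<bar>\<xi>\<bar> * B * (v + 1)" if s1: "s \<ge> 1" for s
  proof -
    have s: "s > 0" using s1 by simp
    let ?A = "w_lower v s" and ?K = "4 * \<bar>\<xi>\<bar> * B * v / s"
    have A: "0 < ?A" "?A < 1" by (rule w_lower_pos_lt_1[OF v s])+
    have inv_sq: "((\<lambda>w. 1 / w\<^sup>2) has_integral (1 / ?A - 1)) {?A..1}"
      using has_integral_inverse_square[of ?A 1] A by simp
    let ?k = "\<lambda>c w. w powr (-1) * (((s + v - v / w) / s) powr (-\<xi>) - c) * G (1 - w)"
    have k_int: "?k c integrable_on {?A..1}" for c
      by (rule integrable_continuous_interval[OF continuous_on_Jupper_integrand[OF G v s]])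
    have "integral {?A..1} (\<lambda>w. w powr (-1) * G (1 - w)) = integral {?A..1} (\<lambda>w. ?k 0 w - ?k 1 w)"
      by (rule integral_cong) (simp add: ring_distribs)
    also have "\<dots> = integral {?A..1} (?k 0) - integral {?A..1} (?k 1)"
      by (rule integral_diff[OF k_int k_int])
    moreover have "integral {?A..1} (?k 0) = Jupper G v \<xi> 1 s"
      unfolding Jupper_def by simp
    ultimately have "\<bar>Jupper G v \<xi> 1 s - integral {?A..1} (\<lambda>w. w powr (-1) * G (1 - w))\<bar>
        = \<bar>integral {?A..1} (?k 1)\<bar>"
      by simp
    also have "\<dots> \<le> integral {?A..1} (\<lambda>w. ?K * (1 / w\<^sup>2))"
    proof (rule integral_norm_bound_integral[where 'a = real, unfolded real_norm_def])
      show "?k 1 integrable_on {?A..1}" by (rule k_int)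
      show "(\<lambda>w. ?K * (1 / w\<^sup>2)) integrable_on {?A..1}"
        using inv_sq by (intro integrable_on_mult_right) (auto simp: has_integral_integrable)
    next
      fix w assume "w \<in> {?A..1}"
      with B[of "1 - w"] w_lower_pos_lt_1[OF v s] show "\<bar>?k 1 w\<bar> \<le> ?K * (1 / w\<^sup>2)"
        by (intro abs_Jupper_integrand_sub_1_le[OF v s _ _ \<xi>]) auto
    qed
    also have "\<dots> = ?K * (1 / ?A - 1)"
      by (rule integral_unique[OF has_integral_mult_right[OF inv_sq]])
    also have "\<dots> \<le> ?K * (1 / ?A)"
      using B0 v s by (intro mult_left_mono) auto
    also have "\<dots> = 4 * \<bar>\<xi>\<bar> * B * (1/2 + v / s)"
      using v s by (simp add: w_lower_def field_simps)
    also have "\<dots> \<le> 4 * \<bar>\<xi>\<bar> * B * (v + 1)"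
      using B0 v s1 divide_left_mono[of 1 s v] by (intro mult_left_mono) auto
    finally show ?thesis .
  qed
  then show ?thesis using that by blast
qed

lemma tendsto_Jupper_1_div_ln:
  fixes G :: "real \<Rightarrow> real"
  assumes G: "continuous_on {0..1} G" and v: "v > 0" and \<xi>: "\<xi> < 1"
  shows "((\<lambda>s. Jupper G v \<xi> 1 s / ln s) \<longlongrightarrow> G 1) at_top"
proof -
  define M where "M t = integral {t..1} (\<lambda>w. w powr (-1) * G (1 - w))" for t
  define E where "E s = Jupper G v \<xi> 1 s - M (w_lower v s)" for s
  obtain C where C: "\<And>s. s \<ge> 1 \<Longrightarrow> \<bar>E s\<bar> \<le> C"
    using Jupper_1_approx[OF G v \<xi>] unfolding E_def M_def by blast
  have "filterlim (w_lower v) (at_right 0) at_top" unfolding w_lower_def using v by real_asymp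
  from filterlim_compose[OF tendsto_integral_div_w_over_ln_at_right_0[OF G] this]
  have "((\<lambda>s. M (w_lower v s) / (- ln (w_lower v s))) \<longlongrightarrow> G 1) at_top"
    unfolding M_def by simp
  moreover have "((\<lambda>s. - ln (w_lower v s) / ln s) \<longlongrightarrow> 1) at_top"
    unfolding w_lower_def using v by real_asymp
  moreover have "((\<lambda>s. E s / ln s) \<longlongrightarrow> 0) at_top"
  proof (rule Lim_null_comparison)
    show "eventually (\<lambda>s. norm (E s / ln s) \<le> C / ln s) at_top"
      using eventually_ge_at_top[of 3]
      by eventually_elim (use C in \<open>auto simp: divide_right_mono\<close>)
    show "((\<lambda>s. C / ln s) \<longlongrightarrow> 0) at_top" by real_asymp
  qed
  ultimately have "((\<lambda>s. M (w_lower v s) / (- ln (w_lower v s)) * (- ln (w_lower v s) / ln s) + E s / ln s)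
      \<longlongrightarrow> G 1 * 1 + 0) at_top"
    by (intro tendsto_intros)
  moreover have "eventually (\<lambda>s. M (w_lower v s) / (- ln (w_lower v s)) * (- ln (w_lower v s) / ln s) + E s / ln s
      = Jupper G v \<xi> 1 s / ln s) at_top"
    using eventually_gt_at_top[of 0]
  proof eventually_elim
    case (elim s)
    then have "ln (w_lower v s) \<noteq> 0" using w_lower_pos_lt_1[OF v elim] by simp
    then show ?case by (simp add: E_def add_divide_distrib[symmetric])
  qed
  ultimately show ?thesis by (simp add: tendsto_cong)
qed

lemma tendsto_Jfun_mult_powr:
  fixes G :: "real \<Rightarrow> real"
  assumes G: "continuous_on {0..1} G" and v: "v > 0" and \<xi>: "\<xi> < 1" and \<gamma>: "\<gamma> > 1"
  shows "((\<lambda>s. Jfun G v \<xi> \<gamma> s * s powr \<xi>)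
          \<longlongrightarrow> v powr (1 - \<gamma>) * integral {0..1} (\<lambda>z. (1 - z) powr (\<gamma> - 2) * G z)) at_top"
proof -
  obtain C where C: "\<And>s. s \<ge> 1 \<Longrightarrow>
      \<bar>Jfun G v \<xi> \<gamma> s * s powr \<xi> - v powr (1 - \<gamma>) * Jupper G v \<xi> \<gamma> s\<bar> \<le> C * s powr (1 - \<gamma>)"
    using Jfun_remainder_bound[OF G v \<xi> less_imp_le[OF \<gamma>]] by blast
  have "((\<lambda>s. Jfun G v \<xi> \<gamma> s * s powr \<xi> - v powr (1 - \<gamma>) * Jupper G v \<xi> \<gamma> s) \<longlongrightarrow> 0) at_top"
  proof (rule Lim_null_comparison)
    show "eventually (\<lambda>s. norm (Jfun G v \<xi> \<gamma> s * s powr \<xi> - v powr (1 - \<gamma>) * Jupper G v \<xi> \<gamma> s)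
        \<le> C * s powr (1 - \<gamma>)) at_top"
      using eventually_ge_at_top[of 1] by eventually_elim (simp add: C)
    show "((\<lambda>s. C * s powr (1 - \<gamma>)) \<longlongrightarrow> 0) at_top"
      using \<gamma> by (auto intro!: tendsto_mult_right_zero tendsto_neg_powr filterlim_ident)
  qed
  from tendsto_add[OF this tendsto_mult_left[OF tendsto_Jupper[OF G v \<xi> \<gamma>], of "v powr (1 - \<gamma>)"]]
  show ?thesis by simp
qed

lemma tendsto_Jfun_mult_powr_div_ln:
  fixes G :: "real \<Rightarrow> real"
  assumes G: "continuous_on {0..1} G" and v: "v > 0" and \<xi>: "\<xi> < 1"
  shows "((\<lambda>s. Jfun G v \<xi> 1 s * s powr \<xi> / ln s) \<longlongrightarrow> G 1) at_top"
proof -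
  obtain C where C: "\<And>s. s \<ge> 1 \<Longrightarrow> \<bar>Jfun G v \<xi> 1 s * s powr \<xi> - Jupper G v \<xi> 1 s\<bar> \<le> C"
    using Jfun_remainder_bound[OF G v \<xi> order_refl] v by auto
  have "((\<lambda>s. (Jfun G v \<xi> 1 s * s powr \<xi> - Jupper G v \<xi> 1 s) / ln s) \<longlongrightarrow> 0) at_top"
  proof (rule Lim_null_comparison)
    show "eventually (\<lambda>s. norm ((Jfun G v \<xi> 1 s * s powr \<xi> - Jupper G v \<xi> 1 s) / ln s) \<le> C / ln s) at_top"
      using eventually_ge_at_top[of 3]
      by eventually_elim (use C in \<open>auto simp: divide_right_mono\<close>)
    show "((\<lambda>s. C / ln s) \<longlongrightarrow> 0) at_top" by real_asymp
  qed
  from tendsto_add[OF this tendsto_Jupper_1_div_ln[OF G v \<xi>]]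
  show ?thesis by (simp add: diff_divide_distrib)
qed

theorem lemma2:
  fixes G :: "real \<Rightarrow> real" and v \<xi> \<gamma> :: real
  assumes "continuous_on {0..1} G"
    and "v > 0" and "\<xi> < 1" and "\<gamma> \<ge> 1"
  shows "(\<gamma> > 1 \<longrightarrow> integral {0..1} (\<lambda>z. (1 - z) powr (\<gamma> - 2) * G z) \<noteq> 0 \<longrightarrow>
            ((\<lambda>s. Jfun G v \<xi> \<gamma> s /
                  (s powr (-\<xi>) * v powr (1 - \<gamma>) * integral {0..1} (\<lambda>z. (1 - z) powr (\<gamma> - 2) * G z)))
              \<longlongrightarrow> 1) at_top)
       \<and> (\<gamma> = 1 \<longrightarrow> G 1 \<noteq> 0 \<longrightarrow>
            ((\<lambda>s. Jfun G v \<xi> \<gamma> s / (s powr (-\<xi>) * ln s * G 1)) \<longlongrightarrow> 1) at_top)"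
proof -
  let ?I = "integral {0..1} (\<lambda>z. (1 - z) powr (\<gamma> - 2) * G z)"
  have powr_minus_eq: "\<forall>\<^sub>F s in at_top. s powr (-\<xi>) = 1 / s powr \<xi>"
    using eventually_gt_at_top[of 0] by eventually_elim (simp add: powr_minus_divide)
  show ?thesis
  proof (intro conjI impI)
    assume "\<gamma> > 1" and "?I \<noteq> 0"
    from tendsto_divide[OF tendsto_Jfun_mult_powr[OF assms(1-3) \<open>\<gamma> > 1\<close>] tendsto_const[of "v powr (1 - \<gamma>) * ?I"]]
    have "((\<lambda>s. Jfun G v \<xi> \<gamma> s * s powr \<xi> / (v powr (1 - \<gamma>) * ?I)) \<longlongrightarrow> 1) at_top"
      using assms(2) \<open>?I \<noteq> 0\<close> by simp
    then show "((\<lambda>s. Jfun G v \<xi> \<gamma> s / (s powr (-\<xi>) * v powr (1 - \<gamma>) * ?I)) \<longlongrightarrow> 1) at_top"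
      using powr_minus_eq by (rule Lim_transform_eventually[OF _ eventually_mono]) (simp add: field_simps)
  next
    assume "\<gamma> = 1" and "G 1 \<noteq> 0"
    from tendsto_divide[OF tendsto_Jfun_mult_powr_div_ln[OF assms(1-3)] tendsto_const, of "G 1"]
    have "((\<lambda>s. Jfun G v \<xi> \<gamma> s * s powr \<xi> / ln s / G 1) \<longlongrightarrow> 1) at_top"
      using \<open>\<gamma> = 1\<close> \<open>G 1 \<noteq> 0\<close> by simp
    then show "((\<lambda>s. Jfun G v \<xi> \<gamma> s / (s powr (-\<xi>) * ln s * G 1)) \<longlongrightarrow> 1) at_top"
      using powr_minus_eq by (rule Lim_transform_eventually[OF _ eventually_mono]) (simp add: field_simps)
  qed
qed

end
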